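(* Let $X$ be a commutative complex Banach algebra. Then for every $a\in X$ the multiplication operator $M_a$, $M_ab=ab$, is not weakly hypercyclic.
   Context: Banach algebras need not be unital. An operator $T\in L(X)$ is weakly hypercyclic if there is $x\in X$ such that $\{T^nx:n\in\mathbb{Z}_+\}$ is dense in $X$ with respect to the weak topology. *)

theory Defs
  imports "HOL-Analysis.Analysis"
begin

text \<open>Complex scalar multiplication on a real Banach algebra, making it a complex
  Banach algebra: a complex vector space structure extending the real one, with
  homogeneous norm, and compatible with the (bilinear) multiplication.\<close>
definition complex_algebra_scaling :: "(complex \<Rightarrow> 'a::{banach, real_normed_algebra} \<Rightarrow> 'a) \<Rightarrow> bool" where
  "complex_algebra_scaling smc \<longleftrightarrow>
     (\<forall>c x y. smc c (x + y) = smc c x + smc c y) \<and>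
     (\<forall>c d x. smc (c + d) x = smc c x + smc d x) \<and>
     (\<forall>c d x. smc (c * d) x = smc c (smc d x)) \<and>
     (\<forall>x. smc 1 x = x) \<and>
     (\<forall>r x. smc (complex_of_real r) x = scaleR r x) \<and>
     (\<forall>c x. norm (smc c x) = norm c * norm x) \<and>
     (\<forall>c x y. smc c (x * y) = smc c x * y) \<and>
     (\<forall>c x y. smc c (x * y) = x * smc c y)"

definition cbounded_linear_functional :: "(complex \<Rightarrow> 'a::real_normed_vector \<Rightarrow> 'a) \<Rightarrow> ('a \<Rightarrow> complex) \<Rightarrow> bool" where
  "cbounded_linear_functional smc f \<longleftrightarrow>
     (\<forall>x y. f (x + y) = f x + f y) \<and>
     (\<forall>c x. f (smc c x) = c * f x) \<and>
     (\<exists>K. \<forall>x. norm (f x) \<le> K * norm x)"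

text \<open>Density in the weak topology: every basic weak neighbourhood
  {y. \<forall>f\<in>F. |f y - f x| < e} (F a finite set of continuous linear functionals)
  meets S.\<close>
definition weakly_dense :: "(complex \<Rightarrow> 'a::real_normed_vector \<Rightarrow> 'a) \<Rightarrow> 'a set \<Rightarrow> bool" where
  "weakly_dense smc S \<longleftrightarrow>
     (\<forall>x F e. finite F \<and> (\<forall>f\<in>F. cbounded_linear_functional smc f) \<and> e > 0 \<longrightarrow>
        (\<exists>s\<in>S. \<forall>f\<in>F. norm (f s - f x) < e))"

definition weakly_hypercyclic :: "(complex \<Rightarrow> 'a::real_normed_vector \<Rightarrow> 'a) \<Rightarrow> ('a \<Rightarrow> 'a) \<Rightarrow> bool" where
  "weakly_hypercyclic smc T \<longleftrightarrow> (\<exists>x. weakly_dense smc {(T ^^ n) x | n. True})"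

end

theory Submission
  imports Defs
begin

text \<open>
  Since the algebra need not have a unit, inverses of 1 - b are replaced by quasi-inverses of b.
  Two cases.

  If \<mu> a is quasi-invertible for every |\<mu>| \<le> 1, the spectrum of a lies in the open unit disc,
  so some power a^(2^k) has norm at most 1 and every orbit of M_a is bounded; a bounded set is not
  weakly dense, because a nonzero continuous functional is bounded on it. The power bound avoids the
  spectral radius formula: averaging the continuous map \<mu> \<mapsto> (1 - \<mu> a)^(-1) over the 2^k-th roots
  of unity yields (1 - \<mu>^(2^k) a^(2^k))^(-1) with the same modulus of continuity, and this is
  incompatible with a^(2^k) having norm > 1 once the primitive root is close to 1.

  If \<mu> a is not quasi-invertible for some |\<mu>| \<le> 1, the Neumann series keeps -\<mu> a away from the
  range of 1 - \<mu> a, and Hahn-Banach yields \<psi> \<noteq> 0 vanishing on that range, i.e.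
  \<psi> (a y) = \<psi> y / \<mu>. Then |\<psi> (a^n x)| never decreases, so \<psi> of an orbit is not dense in the
  complex plane.
\<close>

section \<open>Hahn-Banach for sublinear functionals\<close>

definition sublinear :: "('a::real_vector \<Rightarrow> real) \<Rightarrow> bool" where
  "sublinear p \<longleftrightarrow>
     (\<forall>x y. p (x + y) \<le> p x + p y) \<and> (\<forall>r x. 0 \<le> r \<longrightarrow> p (r *\<^sub>R x) = r * p x)"

lemma sublinear_add: "sublinear p \<Longrightarrow> p (x + y) \<le> p x + p y"
  unfolding sublinear_def by blast

lemma sublinear_scaleR: "sublinear p \<Longrightarrow> 0 \<le> r \<Longrightarrow> p (r *\<^sub>R x) = r * p x"
  unfolding sublinear_def by blast

lemma sublinear_zero: "sublinear p \<Longrightarrow> p 0 = 0"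
  using sublinear_scaleR[of p 0 0] by simp

text \<open>Partial linear functionals are represented by their graphs: single-valued subspaces.\<close>

definition dominated_linear_graphs ::
    "('a::real_vector \<Rightarrow> real) \<Rightarrow> ('a \<times> real) set \<Rightarrow> ('a \<times> real) set set" where
  "dominated_linear_graphs p G0 =
     {G. G0 \<subseteq> G \<and> subspace G \<and> single_valued G \<and> (\<forall>(x, u)\<in>G. u \<le> p x)}"

lemma subspace_Union_chain:
  assumes "chain\<^sub>\<subseteq> C" "C \<noteq> {}" "\<And>S. S \<in> C \<Longrightarrow> subspace S"
  shows "subspace (\<Union>C)"
  unfolding subspace_def
proof (intro conjI ballI allI)
  show "0 \<in> \<Union>C" using assms(2,3) subspace_0 by blast
next
  fix x y assume "x \<in> \<Union>C" "y \<in> \<Union>C"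
  then obtain S where "S \<in> C" "x \<in> S" "y \<in> S"
    using assms(1) unfolding chain_subset_def by blast
  then show "x + y \<in> \<Union>C" using assms(3) subspace_add by blast
next
  fix c x assume "x \<in> \<Union>C"
  then show "c *\<^sub>R x \<in> \<Union>C" using assms(3) subspace_scale by blast
qed

lemma single_valued_Union_chain:
  assumes "chain\<^sub>\<subseteq> C" "\<And>r. r \<in> C \<Longrightarrow> single_valued r"
  shows "single_valued (\<Union>C)"
proof (rule single_valuedI)
  fix x y z assume "(x, y) \<in> \<Union>C" "(x, z) \<in> \<Union>C"
  then obtain r where "r \<in> C" "(x, y) \<in> r" "(x, z) \<in> r"
    using assms(1) unfolding chain_subset_def by blast
  then show "y = z" using assms(2) single_valuedD by metis
qed

lemma dominated_linear_graphs_chain_bounded: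
  assumes "G0 \<in> dominated_linear_graphs p G0" "C \<in> chains (dominated_linear_graphs p G0)"
  shows "\<exists>U\<in>dominated_linear_graphs p G0. \<forall>G\<in>C. G \<subseteq> U"
proof (cases "C = {}")
  case True
  then show ?thesis using assms(1) by blast
next
  case False
  have chain: "chain\<^sub>\<subseteq> C" and sub: "C \<subseteq> dominated_linear_graphs p G0"
    using assms(2) unfolding chains_def by auto
  have "\<Union>C \<in> dominated_linear_graphs p G0"
    using sub False subspace_Union_chain[OF chain False] single_valued_Union_chain[OF chain]
    unfolding dominated_linear_graphs_def by blast
  then show ?thesis by blast
qed

lemma sublinear_extension_constant:
  assumes p: "sublinear p" and G: "subspace G" "\<forall>(x, u)\<in>G. u \<le> p x"
  shows "\<exists>c. \<forall>(x, u)\<in>G. u - p (x - z) \<le> c \<and> c \<le> p (x + z) - u"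
proof -
  have gap: "u - p (x - z) \<le> p (y + z) - v" if "(x, u) \<in> G" "(y, v) \<in> G" for x u y v
  proof -
    have "u + v \<le> p (x + y)"
      using G subspace_add[OF G(1) that] by auto
    also have "\<dots> \<le> p (x - z) + p (y + z)"
      using sublinear_add[OF p, of "x - z" "y + z"] by simp
    finally show ?thesis by simp
  qed
  define S where "S = {u - p (x - z) | x u. (x, u) \<in> G}"
  have "(0, 0) \<in> G" using subspace_0[OF G(1)] by (simp add: zero_prod_def)
  then have "S \<noteq> {}" and "bdd_above S"
    using gap unfolding S_def bdd_above_def by blast+
  have "u - p (x - z) \<le> Sup S \<and> Sup S \<le> p (x + z) - u" if "(x, u) \<in> G" for x u
  proof
    show "u - p (x - z) \<le> Sup S"
      using that \<open>bdd_above S\<close> unfolding S_def by (blast intro: cSup_upper)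
    show "Sup S \<le> p (x + z) - u"
      using that gap \<open>S \<noteq> {}\<close> unfolding S_def by (blast intro: cSup_least)
  qed
  then show ?thesis by blast
qed

lemma dominated_along_extension:
  assumes p: "sublinear p" and G: "subspace G" "\<forall>(x, u)\<in>G. u \<le> p x"
    and c: "\<forall>(x, u)\<in>G. u - p (x - z) \<le> c \<and> c \<le> p (x + z) - u" and xu: "(x, u) \<in> G"
  shows "u + t * c \<le> p (x + t *\<^sub>R z)"
proof -
  have scaled: "(inverse s *\<^sub>R x, inverse s * u) \<in> G" for s
    using subspace_scale[OF G(1) xu, of "inverse s"] by simp
  consider "t = 0" | "t > 0" | "t < 0" by linarith
  then show ?thesis
  proof cases
    case 1
    then show ?thesis using G(2) xu by auto
  next
    case 2
    have "c \<le> p (inverse t *\<^sub>R x + z) - inverse t * u"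
      using c scaled[of t] by auto
    then have "t * c \<le> t * (p (inverse t *\<^sub>R x + z) - inverse t * u)"
      using 2 by (intro mult_left_mono) auto
    also have "\<dots> = p (t *\<^sub>R (inverse t *\<^sub>R x + z)) - u"
      using 2 by (simp add: sublinear_scaleR[OF p] right_diff_distrib)
    also have "t *\<^sub>R (inverse t *\<^sub>R x + z) = x + t *\<^sub>R z"
      using 2 by (simp add: algebra_simps)
    finally show ?thesis by simp
  next
    case 3
    define s where "s = - t"
    have s: "s > 0" using 3 by (simp add: s_def)
    have "inverse s * u - p (inverse s *\<^sub>R x - z) \<le> c"
      using c scaled[of s] by auto
    then have "s * (inverse s * u - p (inverse s *\<^sub>R x - z)) \<le> s * c"
      using s by (intro mult_left_mono) auto
    moreover have "s * (inverse s * u - p (inverse s *\<^sub>R x - z))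
        = u - p (s *\<^sub>R (inverse s *\<^sub>R x - z))"
      using s by (simp add: sublinear_scaleR[OF p] right_diff_distrib)
    moreover have "s *\<^sub>R (inverse s *\<^sub>R x - z) = x + t *\<^sub>R z"
      using s by (simp add: algebra_simps s_def)
    ultimately show ?thesis by (simp add: s_def)
  qed
qed

lemma single_valued_graph_extension:
  assumes M: "subspace M" "single_valued M" and z: "z \<notin> Domain M"
  shows "single_valued {(x + t *\<^sub>R z, u + t * c) | x u t. (x, u) \<in> M}"
proof (rule single_valuedI)
  fix y v v' assume "(y, v) \<in> {(x + t *\<^sub>R z, u + t * c) | x u t. (x, u) \<in> M}"
    "(y, v') \<in> {(x + t *\<^sub>R z, u + t * c) | x u t. (x, u) \<in> M}"
  then obtain x u t x' u' t' where xu: "(x, u) \<in> M" "y = x + t *\<^sub>R z" "v = u + t * c"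
    and xu': "(x', u') \<in> M" "y = x' + t' *\<^sub>R z" "v' = u' + t' * c"
    by blast
  have "t = t'"
  proof (rule ccontr)
    assume "t \<noteq> t'"
    have "(x' - x, u' - u) \<in> M"
      using subspace_diff[OF M(1) xu'(1) xu(1)] by simp
    then have "(inverse (t - t') *\<^sub>R (x' - x), inverse (t - t') * (u' - u)) \<in> M"
      using subspace_scale[OF M(1)] by fastforce
    moreover have "x' - x = (t - t') *\<^sub>R z"
      using xu(2) xu'(2) by (simp add: algebra_simps)
    then have "inverse (t - t') *\<^sub>R (x' - x) = z"
      using \<open>t \<noteq> t'\<close> by simp
    ultimately show False using z by blast
  qed
  then have "x = x'" using xu(2) xu'(2) by simp
  then show "v = v'"
    using xu xu' \<open>t = t'\<close> M(2) single_valuedD by metis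
qed

lemma maximal_dominated_linear_graph_total:
  assumes p: "sublinear p" and M: "M \<in> dominated_linear_graphs p G0"
    and max: "\<forall>G\<in>dominated_linear_graphs p G0. M \<subseteq> G \<longrightarrow> G = M"
  shows "z \<in> Domain M"
proof (rule ccontr)
  assume z: "z \<notin> Domain M"
  have Msub: "subspace M" and Msv: "single_valued M" and Mdom: "\<forall>(x, u)\<in>M. u \<le> p x"
    and G0M: "G0 \<subseteq> M"
    using M unfolding dominated_linear_graphs_def by auto
  obtain c where c: "\<forall>(x, u)\<in>M. u - p (x - z) \<le> c \<and> c \<le> p (x + z) - u"
    using sublinear_extension_constant[OF p Msub Mdom] by blast
  define M' where "M' = {m + w | m w. m \<in> M \<and> w \<in> span {(z, c)}}"
  have M'_eq: "M' = {(x + t *\<^sub>R z, u + t * c) | x u t. (x, u) \<in> M}"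
    unfolding M'_def span_singleton by force
  have "subspace M'"
    unfolding M'_def by (intro subspace_sums Msub subspace_span)
  moreover have "single_valued M'"
    unfolding M'_eq using single_valued_graph_extension[OF Msub Msv z] .
  moreover have "\<forall>(y, v)\<in>M'. v \<le> p y"
    unfolding M'_eq using dominated_along_extension[OF p Msub Mdom c] by blast
  moreover have "M \<subseteq> M'"
    unfolding M'_eq by (force intro: exI[of _ 0])
  ultimately have "M' = M"
    using max G0M unfolding dominated_linear_graphs_def by blast
  moreover have "(z, c) \<in> M'"
    unfolding M'_eq using subspace_0[OF Msub] by (force simp: zero_prod_def)
  ultimately show False using z by blast
qed

theorem Hahn_Banach_graph:
  assumes p: "sublinear p" and G0: "subspace G0" "single_valued G0" "\<forall>(x, u)\<in>G0. u \<le> p x"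
  shows "\<exists>g. linear g \<and> (\<forall>(x, u)\<in>G0. g x = u) \<and> (\<forall>x. g x \<le> p x)"
proof -
  have "G0 \<in> dominated_linear_graphs p G0"
    using G0 unfolding dominated_linear_graphs_def by blast
  then obtain M where M: "M \<in> dominated_linear_graphs p G0"
    and max: "\<forall>G\<in>dominated_linear_graphs p G0. M \<subseteq> G \<longrightarrow> G = M"
    using Zorn_Lemma2 dominated_linear_graphs_chain_bounded by metis
  have Msub: "subspace M" and Msv: "single_valued M" and Mdom: "\<forall>(x, u)\<in>M. u \<le> p x"
    and G0M: "G0 \<subseteq> M"
    using M unfolding dominated_linear_graphs_def by auto
  define g where "g x = (THE u. (x, u) \<in> M)" for x
  have g_eq: "g x = u" if "(x, u) \<in> M" for x u
    unfolding g_def using that Msv by (blast dest: single_valuedD)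
  have g_graph: "(x, g x) \<in> M" for x
    using maximal_dominated_linear_graph_total[OF p M max, of x] g_eq by blast
  have "linear g"
  proof
    show "g (x + y) = g x + g y" for x y
      using g_eq subspace_add[OF Msub g_graph g_graph] by simp
    show "g (r *\<^sub>R x) = r *\<^sub>R g x" for r x
      using g_eq subspace_scale[OF Msub g_graph] by simp
  qed
  then show ?thesis
    using g_eq g_graph G0M Mdom by blast
qed

corollary sublinear_supporting_linear:
  assumes p: "sublinear p"
  shows "\<exists>g. linear g \<and> g v = p v \<and> (\<forall>x. g x \<le> p x)"
proof -
  define G0 where "G0 = span {(v, p v)}"
  have G0_eq: "G0 = range (\<lambda>t. (t *\<^sub>R v, t * p v))"
    unfolding G0_def span_singleton by simp
  have "single_valued G0"
  proof (rule single_valuedI)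
    fix x u u' assume "(x, u) \<in> G0" "(x, u') \<in> G0"
    then obtain t t' where "x = t *\<^sub>R v" "u = t * p v" "x = t' *\<^sub>R v" "u' = t' * p v"
      unfolding G0_eq by blast
    then show "u = u'"
      using sublinear_zero[OF p] by (cases "v = 0") auto
  qed
  moreover have "t * p v \<le> p (t *\<^sub>R v)" for t
  proof (cases "t \<ge> 0")
    case True
    then show ?thesis by (simp add: sublinear_scaleR[OF p])
  next
    case False
    have "0 \<le> p v + p (- v)"
      using sublinear_add[OF p, of v "- v"] sublinear_zero[OF p] by simp
    then have "t * (p v + p (- v)) \<le> 0"
      using False by (intro mult_nonpos_nonneg) auto
    then have "t * p v \<le> (- t) * p (- v)"
      by (simp add: distrib_left)
    also have "\<dots> = p (t *\<^sub>R v)"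
      using False sublinear_scaleR[OF p, of "- t" "- v"] by simp
    finally show ?thesis .
  qed
  then have "\<forall>(x, u)\<in>G0. u \<le> p x"
    unfolding G0_eq by auto
  ultimately obtain g where "linear g" "\<forall>(x, u)\<in>G0. g x = u" "\<forall>x. g x \<le> p x"
    using Hahn_Banach_graph[OF p] unfolding G0_def by blast
  moreover have "(v, p v) \<in> G0"
    unfolding G0_def by (simp add: span_base)
  ultimately show ?thesis by auto
qed

lemma infdist_greatest:
  assumes "A \<noteq> {}" "\<And>a. a \<in> A \<Longrightarrow> c \<le> dist x a"
  shows "c \<le> infdist x A"
  using assms by (simp add: infdist_notempty cINF_greatest)

lemma infdist_add_subspace_le:
  fixes V :: "'a::real_normed_vector set"
  assumes V: "subspace V"
  shows "infdist (x + y) V \<le> infdist x V + infdist y V"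
proof -
  have "V \<noteq> {}" using subspace_0[OF V] by blast
  have step: "infdist (x + y) V - dist y b \<le> dist x a" if "a \<in> V" "b \<in> V" for a b
  proof -
    have "infdist (x + y) V \<le> dist (x + y) (a + b)"
      using subspace_add[OF V that] by (rule infdist_le)
    also have "\<dots> \<le> dist x a + dist y b"
      by (simp add: dist_norm add_diff_add norm_triangle_ineq)
    finally show ?thesis by simp
  qed
  have "infdist (x + y) V - dist y b \<le> infdist x V" if "b \<in> V" for b
    by (rule infdist_greatest[OF \<open>V \<noteq> {}\<close>]) (rule step[OF _ that])
  then have "infdist (x + y) V - infdist x V \<le> dist y b" if "b \<in> V" for b
    using that by (simp add: algebra_simps)
  then have "infdist (x + y) V - infdist x V \<le> infdist y V"
    by (rule infdist_greatest[OF \<open>V \<noteq> {}\<close>])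
  then show ?thesis by simp
qed

lemma infdist_scaleR_subspace_le:
  fixes V :: "'a::real_normed_vector set"
  assumes V: "subspace V" and "r > 0"
  shows "infdist (r *\<^sub>R x) V \<le> r * infdist x V"
proof -
  have "infdist (r *\<^sub>R x) V / r \<le> dist x a" if "a \<in> V" for a
  proof -
    have "infdist (r *\<^sub>R x) V \<le> dist (r *\<^sub>R x) (r *\<^sub>R a)"
      using subspace_scale[OF V that] by (rule infdist_le)
    also have "\<dots> = r * dist x a"
      using \<open>r > 0\<close> by (simp add: dist_norm flip: scaleR_diff_right)
    finally show ?thesis using \<open>r > 0\<close> by (simp add: field_simps)
  qed
  then have "infdist (r *\<^sub>R x) V / r \<le> infdist x V"
    using subspace_0[OF V] by (blast intro: infdist_greatest)
  then show ?thesis using \<open>r > 0\<close> by (simp add: field_simps)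
qed

lemma sublinear_infdist_subspace:
  fixes V :: "'a::real_normed_vector set"
  assumes V: "subspace V"
  shows "sublinear (\<lambda>x. infdist x V)"
  unfolding sublinear_def
proof (intro conjI allI impI)
  show "infdist (x + y) V \<le> infdist x V + infdist y V" for x y
    using infdist_add_subspace_le[OF V] .
  fix r :: real and x assume "0 \<le> r"
  show "infdist (r *\<^sub>R x) V = r * infdist x V"
  proof (cases "r = 0")
    case True
    then show ?thesis using subspace_0[OF V] by simp
  next
    case False
    then have r: "r > 0" using \<open>0 \<le> r\<close> by simp
    have "infdist x V = infdist (inverse r *\<^sub>R (r *\<^sub>R x)) V" using r by simp
    also have "\<dots> \<le> inverse r * infdist (r *\<^sub>R x) V"
      using r by (intro infdist_scaleR_subspace_le[OF V]) simp
    finally have "r * infdist x V \<le> infdist (r *\<^sub>R x) V" using r by (simp add: field_simps)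
    then show ?thesis using infdist_scaleR_subspace_le[OF V r, of x] by linarith
  qed
qed

section \<open>Weak density\<close>

lemma cbounded_linear_functional_add:
  "cbounded_linear_functional smc \<psi> \<Longrightarrow> \<psi> (x + y) = \<psi> x + \<psi> y"
  unfolding cbounded_linear_functional_def by blast

lemma cbounded_linear_functional_smc:
  "cbounded_linear_functional smc \<psi> \<Longrightarrow> \<psi> (smc c x) = c * \<psi> x"
  unfolding cbounded_linear_functional_def by blast

lemma cbounded_linear_functional_bounded:
  "cbounded_linear_functional smc \<psi> \<Longrightarrow> \<exists>K. \<forall>x. cmod (\<psi> x) \<le> K * norm x"
  unfolding cbounded_linear_functional_def by blast

lemma cbounded_linear_functional_diff:
  assumes "cbounded_linear_functional smc \<psi>"
  shows "\<psi> (x - y) = \<psi> x - \<psi> y"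
  using cbounded_linear_functional_add[OF assms, of "x - y" y] by simp

lemma weakly_denseD:
  assumes "weakly_dense smc S" "finite F" "\<forall>f\<in>F. cbounded_linear_functional smc f" "e > 0"
  shows "\<exists>s\<in>S. \<forall>f\<in>F. cmod (f s - f x) < e"
  using assms unfolding weakly_dense_def by blast

lemma weakly_dense_functional_approx:
  assumes "weakly_dense smc S" "cbounded_linear_functional smc \<psi>" "\<psi> v \<noteq> 0" "e > 0"
  shows "\<exists>s\<in>S. cmod (\<psi> s - z) < e"
proof -
  have "\<psi> (smc (z / \<psi> v) v) = z"
    using cbounded_linear_functional_smc[OF assms(2)] assms(3) by simp
  then show ?thesis
    using weakly_denseD[OF assms(1), of "{\<psi>}" e "smc (z / \<psi> v) v"] assms(2,4) by simp
qed

lemma adjoint_eigenvector_not_weakly_hypercyclic: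
  assumes \<psi>: "cbounded_linear_functional smc \<psi>" "\<psi> v \<noteq> 0"
    and eigen: "\<And>y. \<psi> (T y) = c * \<psi> y" and growth: "1 \<le> cmod c"
  shows "\<not> weakly_hypercyclic smc T"
proof
  assume "weakly_hypercyclic smc T"
  then obtain x where dense: "weakly_dense smc {(T ^^ n) x | n. True}"
    unfolding weakly_hypercyclic_def by blast
  have orbit: "\<psi> ((T ^^ n) x) = c ^ n * \<psi> x" for n
    by (induction n) (simp_all add: eigen)
  show False
  proof (cases "\<psi> x = 0")
    case True
    obtain s where "s \<in> {(T ^^ n) x | n. True}" "cmod (\<psi> s - \<psi> v) < cmod (\<psi> v)"
      using weakly_dense_functional_approx[OF dense \<psi>, of "cmod (\<psi> v)" "\<psi> v"] \<psi>(2) by auto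
    then show False using orbit True by auto
  next
    case False
    obtain s where "s \<in> {(T ^^ n) x | n. True}" "cmod (\<psi> s) < cmod (\<psi> x)"
      using weakly_dense_functional_approx[OF dense \<psi>, of "cmod (\<psi> x)" 0] False by auto
    then obtain n where "cmod (c ^ n * \<psi> x) < cmod (\<psi> x)"
      using orbit by auto
    moreover have "1 \<le> cmod c ^ n" using growth by (simp add: one_le_power)
    ultimately show False
      using mult_right_mono[of 1 "cmod c ^ n" "cmod (\<psi> x)"] by (simp add: norm_mult norm_power)
  qed
qed

section \<open>Quasi-inverses\<close>

text \<open>In the unitisation, quasi_inverse b q says (1 - b) * (1 - q) = 1.\<close>

definition quasi_inverse :: "'a::comm_ring \<Rightarrow> 'a \<Rightarrow> bool" where
  "quasi_inverse b q \<longleftrightarrow> b + q = b * q"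

definition quasi_invertible :: "'a::comm_ring \<Rightarrow> bool" where
  "quasi_invertible b \<longleftrightarrow> (\<exists>q. quasi_inverse b q)"

lemma quasi_invertible_if_quasi_invertible_product:
  fixes b y :: "'a::comm_ring"
  assumes "quasi_invertible (b + y - b * y)"
  shows "quasi_invertible b"
proof -
  obtain q where q: "quasi_inverse (b + y - b * y) q"
    using assms unfolding quasi_invertible_def by blast
  have "b + (y + q - y * q) - b * (y + q - y * q) = (b + y - b * y) + q - (b + y - b * y) * q"
    by (simp add: algebra_simps)
  also have "\<dots> = 0"
    using q unfolding quasi_inverse_def by simp
  finally show ?thesis
    unfolding quasi_invertible_def quasi_inverse_def by (metis eq_iff_diff_eq_0)
qed

lemma quasi_inverse_diff:
  fixes A B p q :: "'a::comm_ring"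
  assumes "quasi_inverse A p" "quasi_inverse B q"
  shows "q - p = (A - B) - p * (A - B) - (A - B) * q + p * (A - B) * q"
proof -
  have "A * p = A + p" "p * A = A + p" "B * q = B + q"
    using assms unfolding quasi_inverse_def by (simp_all add: mult.commute)
  moreover have "(A - B) - p * (A - B) - (A - B) * q + p * (A - B) * q
      = A - B - p * A + p * B - A * q + B * q + (p * A) * q - p * (B * q)"
    by (simp add: algebra_simps)
  ultimately show ?thesis by (simp add: algebra_simps)
qed

lemma quasi_inverse_square:
  fixes c p p' :: "'a::{comm_ring, real_algebra}"
  assumes "quasi_inverse c p" "quasi_inverse (- c) p'"
  shows "quasi_inverse (c * c) ((1/2) *\<^sub>R (p + p'))"
    and "c + c = (p' - p) - c * c * (p' - p)"
proof -
  have e: "c * p = c + p" and e': "c * p' = c - p'"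
    using assms unfolding quasi_inverse_def by (simp_all add: algebra_simps)
  have cp: "c * c * p = c * c + c + p"
    by (simp add: mult.assoc e distrib_left add.assoc)
  have cp': "c * c * p' = c * c - c + p'"
    by (simp add: mult.assoc e' right_diff_distrib)
  have "c * c * ((1/2) *\<^sub>R (p + p')) = (1/2) *\<^sub>R (c * c * p + c * c * p')"
    by (simp add: mult_scaleR_right distrib_left)
  also have "\<dots> = (1/2) *\<^sub>R ((c * c + c * c) + (p + p'))"
    by (simp only: cp cp') (simp add: algebra_simps)
  also have "\<dots> = c * c + (1/2) *\<^sub>R (p + p')"
    by (simp add: scaleR_add_right flip: scaleR_add_left)
  finally show "quasi_inverse (c * c) ((1/2) *\<^sub>R (p + p'))"
    unfolding quasi_inverse_def by simp
  show "c + c = (p' - p) - c * c * (p' - p)"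
    by (simp add: right_diff_distrib cp cp')
qed

lemma norm_diff_quasi_inverses_opposite:
  fixes c p p' :: "'a::{real_normed_algebra, comm_ring}"
  assumes "quasi_inverse c p" "quasi_inverse (- c) p'" "norm c = 1"
  shows "1 \<le> norm (p' - p)"
proof -
  have "2 = norm (c + c)"
    using assms(3) by (simp flip: scaleR_2)
  also have "\<dots> \<le> norm (p' - p) + norm (c * c * (p' - p))"
    unfolding quasi_inverse_square(2)[OF assms(1,2)] by (rule norm_triangle_ineq4)
  also have "norm (c * c * (p' - p)) \<le> norm (p' - p)"
    using norm_mult_ineq[of "c * c" "p' - p"] norm_mult_ineq[of c c] assms(3)
      mult_right_mono[of "norm (c * c)" 1 "norm (p' - p)"] by simp
  finally show ?thesis by simp
qed

lemma norm_quasi_inverse_diff_le: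
  fixes A B p q :: "'a::{real_normed_algebra, comm_ring}"
  assumes qi: "quasi_inverse A p" "quasi_inverse B q"
    and small: "norm (A - B) * (1 + norm p) \<le> 1/2"
  shows "norm (q - p) \<le> 2 * (1 + norm p)^2 * norm (A - B)"
proof -
  define h where "h = norm (A - B)"
  define m where "m = norm p"
  have "norm (p * (A - B)) \<le> m * h" "norm ((A - B) * q) \<le> h * norm q"
    unfolding h_def m_def by (rule norm_mult_ineq)+
  moreover have "norm (p * (A - B) * q) \<le> m * h * norm q"
    using norm_mult_ineq[of "p * (A - B)" q] mult_right_mono[OF calculation(1) norm_ge_zero[of q]]
    by linarith
  ultimately have "norm (q - p) \<le> h + m * h + h * norm q + m * h * norm q"
    unfolding quasi_inverse_diff[OF qi] h_def
    using norm_triangle_ineq4[of "A - B" "p * (A - B)"]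
      norm_triangle_ineq4[of "A - B - p * (A - B)" "(A - B) * q"]
      norm_triangle_ineq[of "A - B - p * (A - B) - (A - B) * q" "p * (A - B) * q"]
    by linarith
  also have "\<dots> = h * (1 + m) * (1 + norm q)"
    by (simp add: algebra_simps)
  also have "\<dots> \<le> h * (1 + m) * (1 + m + norm (q - p))"
    using norm_triangle_ineq[of p "q - p"] small
    by (intro mult_left_mono) (auto simp: h_def m_def)
  finally have "norm (q - p) \<le> h * (1 + m)^2 + h * (1 + m) * norm (q - p)"
    by (simp add: algebra_simps power2_eq_square)
  moreover have "h * (1 + m) * norm (q - p) \<le> (1/2) * norm (q - p)"
    using small by (intro mult_right_mono) (auto simp: h_def m_def)
  ultimately have "norm (q - p) \<le> 2 * (h * (1 + m)^2)"
    by linarith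
  then show ?thesis by (simp add: h_def m_def algebra_simps)
qed

lemma continuous_on_quasi_inverse:
  fixes f Q :: "'b::metric_space \<Rightarrow> 'a::{real_normed_algebra, comm_ring}"
  assumes f: "continuous_on S f" and Q: "\<And>\<mu>. \<mu> \<in> S \<Longrightarrow> quasi_inverse (f \<mu>) (Q \<mu>)"
  shows "continuous_on S Q"
  unfolding continuous_on_def
proof (intro ballI)
  fix \<mu> assume "\<mu> \<in> S"
  define C where "C = 2 * (1 + norm (Q \<mu>))^2"
  have lim: "(f \<longlongrightarrow> f \<mu>) (at \<mu> within S)"
    using f \<open>\<mu> \<in> S\<close> by (simp add: continuous_on_def)
  have "\<forall>\<^sub>F \<nu> in at \<mu> within S. dist (f \<nu>) (f \<mu>) < 1 / (2 * (1 + norm (Q \<mu>)))"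
    by (rule tendstoD[OF lim]) (simp add: add_pos_nonneg)
  moreover have "\<forall>\<^sub>F \<nu> in at \<mu> within S. \<nu> \<in> S"
    by (simp add: eventually_at_filter)
  ultimately have "\<forall>\<^sub>F \<nu> in at \<mu> within S. norm (Q \<nu> - Q \<mu>) \<le> C * norm (f \<nu> - f \<mu>)"
  proof eventually_elim
    case (elim \<nu>)
    then have "norm (f \<mu> - f \<nu>) * (1 + norm (Q \<mu>)) \<le> 1/2"
      by (simp add: dist_norm norm_minus_commute field_simps add_pos_nonneg)
    then show ?case
      using norm_quasi_inverse_diff_le[OF Q[OF \<open>\<mu> \<in> S\<close>] Q[OF elim(2)]]
      by (simp add: C_def norm_minus_commute)
  qed
  moreover have "((\<lambda>\<nu>. C * norm (f \<nu> - f \<mu>)) \<longlongrightarrow> 0) (at \<mu> within S)"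
    using tendsto_mult_right_zero[OF tendsto_norm_zero[OF lim[unfolded Lim_null[of f]]]] .
  ultimately show "(Q \<longlongrightarrow> Q \<mu>) (at \<mu> within S)"
    by (subst Lim_null) (rule Lim_null_comparison)
qed

lemma norm_funpow_mult_le:
  fixes a y :: "'a::real_normed_algebra"
  shows "norm (((*) a ^^ n) y) \<le> norm a ^ n * norm y"
proof (induction n)
  case (Suc n)
  have "norm (((*) a ^^ Suc n) y) \<le> norm a * norm (((*) a ^^ n) y)"
    by (simp add: norm_mult_ineq)
  also have "\<dots> \<le> norm a * (norm a ^ n * norm y)"
    using Suc by (simp add: mult_left_mono)
  finally show ?case by (simp add: mult.assoc)
qed simp

lemma quasi_invertible_if_norm_less_one:
  fixes e :: "'a::{banach, real_normed_algebra, comm_ring}"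
  assumes "norm e < 1"
  shows "quasi_invertible e"
proof -
  have "summable (\<lambda>j. norm e ^ j * norm e)"
    using assms by (simp add: summable_mult2 summable_geometric)
  then have sum: "summable (\<lambda>j. ((*) e ^^ j) e)"
    by (rule summable_comparison_test'[of _ 0]) (simp add: norm_funpow_mult_le)
  define s where "s = (\<Sum>j. ((*) e ^^ j) e)"
  have "e * s = (\<Sum>j. ((*) e ^^ Suc j) e)"
    unfolding s_def using suminf_mult[OF sum] by simp
  also have "\<dots> = s - e"
    unfolding s_def using suminf_split_head[OF sum] by simp
  finally have "quasi_inverse e (- s)"
    unfolding quasi_inverse_def by simp
  then show ?thesis
    unfolding quasi_invertible_def by blast
qed

text \<open>The power a^(2^k), available without a unit.\<close>

fun iterated_square :: "'a::times \<Rightarrow> nat \<Rightarrow> 'a" where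
  "iterated_square a 0 = a"
| "iterated_square a (Suc k) = iterated_square a k * iterated_square a k"

lemma funpow_mult_iterated_square:
  fixes a y :: "'a::semigroup_mult"
  shows "((*) a ^^ 2 ^ k) y = iterated_square a k * y"
proof (induction k arbitrary: y)
  case (Suc k)
  have "((*) a ^^ 2 ^ Suc k) y = ((*) a ^^ 2 ^ k) (((*) a ^^ 2 ^ k) y)"
    by (simp add: mult_2 funpow_add)
  then show ?case using Suc by (simp add: mult.assoc)
qed simp

lemma bounded_orbit_if_norm_iterated_square_le_one:
  fixes a x :: "'a::real_normed_algebra"
  assumes "norm (iterated_square a k) \<le> 1"
  shows "bounded {((*) a ^^ n) x | n. True}"
proof -
  define N :: nat where "N = 2 ^ k"
  have "norm (((*) a ^^ n) x) \<le> max 1 (norm a) ^ N * norm x" for n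
  proof -
    define q where "q = n div N"
    have "(*) a ^^ N = (*) (iterated_square a k)"
      by (rule ext) (simp add: N_def funpow_mult_iterated_square)
    then have "(*) a ^^ (N * q) = (*) (iterated_square a k) ^^ q"
      by (simp flip: funpow_mult)
    moreover have "(*) a ^^ n = (*) a ^^ (n mod N) \<circ> (*) a ^^ (N * q)"
      unfolding q_def by (simp flip: funpow_add)
    ultimately have "((*) a ^^ n) x = ((*) a ^^ (n mod N)) (((*) (iterated_square a k) ^^ q) x)"
      by simp
    then have "norm (((*) a ^^ n) x) \<le> norm a ^ (n mod N) * norm (((*) (iterated_square a k) ^^ q) x)"
      by (simp only: norm_funpow_mult_le)
    also have "\<dots> \<le> norm a ^ (n mod N) * (norm (iterated_square a k) ^ q * norm x)"
      by (intro mult_left_mono norm_funpow_mult_le) simp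
    also have "\<dots> \<le> norm a ^ (n mod N) * norm x"
      using assms by (intro mult_left_mono mult_left_le_one_le) (auto simp: power_le_one)
    also have "\<dots> \<le> max 1 (norm a) ^ N * norm x"
    proof (intro mult_right_mono)
      have "norm a ^ (n mod N) \<le> max 1 (norm a) ^ (n mod N)"
        by (intro power_mono) auto
      also have "\<dots> \<le> max 1 (norm a) ^ N"
        using mod_less_divisor[of N n] by (intro power_increasing) (auto simp: N_def)
      finally show "norm a ^ (n mod N) \<le> max 1 (norm a) ^ N" .
    qed simp
    finally show ?thesis .
  qed
  then show ?thesis
    unfolding bounded_iff by blast
qed

lemma ex_le_one_power_mult_eq_one:
  fixes x :: real
  assumes "1 < x" "0 < n"
  shows "\<exists>r. 0 < r \<and> r \<le> 1 \<and> r ^ n * x = 1"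
proof (intro exI conjI)
  have inv: "0 < inverse x" "inverse x \<le> 1"
    using assms(1) by (auto simp: inverse_le_1_iff)
  show "0 < root n (inverse x)"
    using inv assms(2) by (intro real_root_gt_zero)
  show "root n (inverse x) \<le> 1"
    using inv assms(2) real_root_le_iff[of n "inverse x" 1] by simp
  show "root n (inverse x) ^ n * x = 1"
    using inv assms by (simp add: real_root_pow_pos)
qed

definition zeta :: "nat \<Rightarrow> complex" where
  "zeta k = exp (\<i> * of_real pi / of_nat (2 ^ k))"

lemma zeta_power: "zeta k ^ 2 ^ k = -1"
  unfolding zeta_def by (subst exp_divide_power_eq) simp_all

lemma norm_zeta: "cmod (zeta k) = 1"
  unfolding zeta_def by (simp add: norm_exp_eq_Re)

lemma zeta_tendsto: "zeta \<longlonglongrightarrow> 1"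
proof -
  have "(\<lambda>k. \<i> * of_real (pi * (1/2) ^ k)) \<longlonglongrightarrow> \<i> * of_real (pi * 0)"
    by (intro tendsto_intros LIMSEQ_power_zero) simp
  then have "(\<lambda>k. exp (\<i> * of_real (pi * (1/2) ^ k))) \<longlonglongrightarrow> exp 0"
    by (intro tendsto_intros) simp
  moreover have "zeta = (\<lambda>k. exp (\<i> * of_real (pi * (1/2) ^ k)))"
    by (rule ext) (simp add: zeta_def power_divide)
  ultimately show ?thesis
    by simp
qed

text \<open>
  The mean of Q (\<omega> * \<mu>) over the 2^k-th roots of unity \<omega>. If Q \<mu> is a quasi-inverse of \<mu> a, it is
  a quasi-inverse of \<mu>^(2^k) a^(2^k), by 1/(1 - c^2) = (1/(1 - c) + 1/(1 + c))/2.
\<close>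

fun root_average :: "(complex \<Rightarrow> 'a::real_vector) \<Rightarrow> nat \<Rightarrow> complex \<Rightarrow> 'a" where
  "root_average Q 0 \<mu> = Q \<mu>"
| "root_average Q (Suc k) \<mu> = (1/2) *\<^sub>R (root_average Q k \<mu> + root_average Q k (\<mu> * zeta k))"

lemma root_average_modulus:
  fixes Q :: "complex \<Rightarrow> 'a::real_normed_vector"
  assumes Q: "\<And>\<mu> \<nu>. cmod \<mu> \<le> 1 \<Longrightarrow> cmod \<nu> \<le> 1 \<Longrightarrow> dist \<nu> \<mu> < \<delta> \<Longrightarrow> dist (Q \<nu>) (Q \<mu>) < e"
  shows "cmod \<mu> \<le> 1 \<Longrightarrow> cmod \<nu> \<le> 1 \<Longrightarrow> dist \<nu> \<mu> < \<delta>
    \<Longrightarrow> dist (root_average Q k \<nu>) (root_average Q k \<mu>) < e"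
proof (induction k arbitrary: \<mu> \<nu>)
  case (Suc k)
  have "dist (\<nu> * zeta k) (\<mu> * zeta k) = dist \<nu> \<mu>"
    by (simp add: dist_norm norm_zeta norm_mult flip: left_diff_distrib)
  then have "dist (root_average Q k (\<nu> * zeta k)) (root_average Q k (\<mu> * zeta k)) < e"
    using Suc by (intro Suc.IH) (auto simp: norm_mult norm_zeta)
  moreover have "dist (root_average Q k \<nu>) (root_average Q k \<mu>) < e"
    using Suc by blast
  moreover have "root_average Q (Suc k) \<nu> - root_average Q (Suc k) \<mu>
      = (1/2) *\<^sub>R ((root_average Q k \<nu> - root_average Q k \<mu>)
          + (root_average Q k (\<nu> * zeta k) - root_average Q k (\<mu> * zeta k)))"
    by (simp add: algebra_simps)
  ultimately show ?case
    using norm_triangle_ineq[of "root_average Q k \<nu> - root_average Q k \<mu>"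
        "root_average Q k (\<nu> * zeta k) - root_average Q k (\<mu> * zeta k)"]
    by (simp add: dist_norm)
qed (use Q in simp)

section \<open>Complex Banach algebras\<close>

locale complex_banach_algebra =
  fixes smc :: "complex \<Rightarrow> 'a::{banach, real_normed_algebra} \<Rightarrow> 'a"
  assumes complex_algebra_scaling: "complex_algebra_scaling smc"
begin

lemma smc_add: "smc c (x + y) = smc c x + smc c y"
  using complex_algebra_scaling unfolding complex_algebra_scaling_def by blast

lemma smc_add_left: "smc (c + d) x = smc c x + smc d x"
  using complex_algebra_scaling unfolding complex_algebra_scaling_def by blast

lemma smc_smc: "smc c (smc d x) = smc (c * d) x"
  using complex_algebra_scaling unfolding complex_algebra_scaling_def by metis

lemma smc_of_real: "smc (of_real r) x = r *\<^sub>R x"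
  using complex_algebra_scaling unfolding complex_algebra_scaling_def by blast

lemma norm_smc: "norm (smc c x) = cmod c * norm x"
  using complex_algebra_scaling unfolding complex_algebra_scaling_def by blast

lemma smc_mult_left: "smc c x * y = smc c (x * y)"
  using complex_algebra_scaling unfolding complex_algebra_scaling_def by metis

lemma smc_mult_right: "x * smc c y = smc c (x * y)"
  using complex_algebra_scaling unfolding complex_algebra_scaling_def by metis

lemma smc_scaleR: "smc c (r *\<^sub>R x) = r *\<^sub>R smc c x"
  by (metis smc_of_real smc_smc mult.commute)

lemma bounded_linear_smc: "bounded_linear (smc c)"
proof (rule bounded_linear_intro[where K = "cmod c"])
  show "smc c (x + y) = smc c x + smc c y" for x y by (rule smc_add)
  show "smc c (r *\<^sub>R x) = r *\<^sub>R smc c x" for r x by (rule smc_scaleR)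
  show "norm (smc c x) \<le> norm x * cmod c" for x by (simp add: norm_smc)
qed

lemma smc_zero [simp]: "smc c 0 = 0"
  by (rule linear_0[OF bounded_linear.linear[OF bounded_linear_smc]])

lemma smc_diff: "smc c (x - y) = smc c x - smc c y"
  by (rule linear_diff[OF bounded_linear.linear[OF bounded_linear_smc]])

lemma smc_decompose: "smc c x = Re c *\<^sub>R x + Im c *\<^sub>R smc \<i> x"
proof -
  have "c = of_real (Re c) + \<i> * of_real (Im c)"
    by (simp add: complex_eq_iff)
  then have "smc c x = smc (of_real (Re c)) x + smc \<i> (smc (of_real (Im c)) x)"
    by (metis smc_add_left smc_smc)
  then show ?thesis
    by (simp add: smc_of_real smc_scaleR)
qed

lemma smc_ii: "smc \<i> (smc \<i> x) = - x"
  using smc_of_real[of "- 1" x] by (simp add: smc_smc)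

lemma cbounded_linear_functional_complexification:
  assumes g: "linear g" and bound: "\<And>x. \<bar>g x\<bar> \<le> K * norm x"
  shows "cbounded_linear_functional smc (\<lambda>x. of_real (g x) - \<i> * of_real (g (smc \<i> x)))"
  unfolding cbounded_linear_functional_def
proof (intro conjI allI exI)
  fix x y
  show "of_real (g (x + y)) - \<i> * of_real (g (smc \<i> (x + y)))
      = of_real (g x) - \<i> * of_real (g (smc \<i> x)) + (of_real (g y) - \<i> * of_real (g (smc \<i> y)))"
    by (simp add: smc_add linear_add[OF g] algebra_simps)
next
  fix c x
  have "g (smc c x) = Re c * g x + Im c * g (smc \<i> x)"
    by (simp add: smc_decompose[of c x] linear_add[OF g] linear_scale[OF g])
  moreover have "g (smc \<i> (smc c x)) = Re c * g (smc \<i> x) - Im c * g x"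
    by (simp add: smc_decompose[of c x] smc_add smc_ii linear_diff[OF g] linear_scale[OF g]
        smc_scaleR)
  ultimately show "of_real (g (smc c x)) - \<i> * of_real (g (smc \<i> (smc c x)))
      = c * (of_real (g x) - \<i> * of_real (g (smc \<i> x)))"
    by (simp add: complex_eq_iff)
next
  fix x
  have "cmod (of_real (g x) - \<i> * of_real (g (smc \<i> x))) \<le> \<bar>g x\<bar> + \<bar>g (smc \<i> x)\<bar>"
    using norm_triangle_ineq4[of "of_real (g x)" "\<i> * of_real (g (smc \<i> x))"]
    by (simp add: norm_mult)
  also have "\<dots> \<le> 2 * K * norm x"
    using bound[of x] bound[of "smc \<i> x"] by (simp add: norm_smc)
  finally show "cmod (of_real (g x) - \<i> * of_real (g (smc \<i> x))) \<le> 2 * K * norm x" .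
qed

lemma separating_cbounded_linear_functional:
  assumes V: "subspace V" "\<And>c x. x \<in> V \<Longrightarrow> smc c x \<in> V" and v: "v \<notin> closure V"
  shows "\<exists>\<psi>. cbounded_linear_functional smc \<psi> \<and> (\<forall>x\<in>V. \<psi> x = 0) \<and> \<psi> v \<noteq> 0"
proof -
  obtain g where g: "linear g" "g v = infdist v V" "\<And>x. g x \<le> infdist x V"
    using sublinear_supporting_linear[OF sublinear_infdist_subspace[OF V(1)]] by blast
  have "V \<noteq> {}" using subspace_0[OF V(1)] by blast
  have g_le_norm: "g x \<le> norm x" for x
    using g(3)[of x] infdist_le[OF subspace_0[OF V(1)], of x] by simp
  have bound: "\<bar>g x\<bar> \<le> 1 * norm x" for x
    using g_le_norm[of x] g_le_norm[of "- x"] linear_neg[OF g(1), of x] by simp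
  have g_V: "g x = 0" if "x \<in> V" for x
    using g(3)[of x] g(3)[of "- x"] that subspace_neg[OF V(1) that] linear_neg[OF g(1), of x]
    by simp
  define \<psi> where "\<psi> x = of_real (g x) - \<i> * of_real (g (smc \<i> x))" for x
  have "cbounded_linear_functional smc \<psi>"
    unfolding \<psi>_def using cbounded_linear_functional_complexification[OF g(1) bound] .
  moreover have "\<forall>x\<in>V. \<psi> x = 0"
    using g_V V(2) by (simp add: \<psi>_def)
  moreover have "Re (\<psi> v) \<noteq> 0"
    using g(2) v \<open>V \<noteq> {}\<close> in_closure_iff_infdist_zero[of V v] by (simp add: \<psi>_def)
  ultimately show ?thesis by (metis zero_complex.sel(1))
qed

lemma bounded_not_weakly_dense:
  assumes "(v::'a) \<noteq> 0" "bounded S"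
  shows "\<not> weakly_dense smc S"
proof
  assume dense: "weakly_dense smc S"
  obtain \<psi> where \<psi>: "cbounded_linear_functional smc \<psi>" "\<psi> v \<noteq> 0"
    using separating_cbounded_linear_functional[of "{0}" v] assms(1) by auto
  obtain K where K: "\<And>x. cmod (\<psi> x) \<le> K * norm x"
    using cbounded_linear_functional_bounded[OF \<psi>(1)] by blast
  obtain B where B: "B > 0" "\<And>s. s \<in> S \<Longrightarrow> norm s \<le> B"
    using assms(2) bounded_pos by blast
  have small: "cmod (\<psi> s) \<le> \<bar>K\<bar> * B" if "s \<in> S" for s
    using K[of s] mult_right_mono[OF abs_ge_self norm_ge_zero, of K s]
      mult_left_mono[OF B(2)[OF that] abs_ge_zero[of K]] by linarith
  define t where "t = \<bar>K\<bar> * B + 1"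
  have "cmod (of_real t) = t"
    using B(1) unfolding norm_of_real t_def by simp
  moreover obtain s where "s \<in> S" "cmod (\<psi> s - of_real t) < 1"
    using weakly_dense_functional_approx[OF dense \<psi>, of 1] by auto
  ultimately show False
    using small[of s] norm_triangle_ineq3[of "of_real t" "\<psi> s"]
    by (simp add: norm_minus_commute t_def)
qed

end

locale comm_complex_banach_algebra = complex_banach_algebra smc
  for smc :: "complex \<Rightarrow> 'a::{banach, real_normed_algebra, comm_ring} \<Rightarrow> 'a"
begin

lemma smc_uminus_left: "smc (- c) x = - smc c x"
  using smc_of_real[of "- 1" x] smc_smc[of c "- 1" x]
  by (simp add: linear_neg[OF bounded_linear.linear[OF bounded_linear_smc]])

lemma bounded_linear_smc_left: "bounded_linear (\<lambda>\<mu>. smc \<mu> a)"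
proof (rule bounded_linear_intro[where K = "norm a"])
  show "smc (\<mu> + \<nu>) a = smc \<mu> a + smc \<nu> a" for \<mu> \<nu> by (rule smc_add_left)
  show "smc (r *\<^sub>R \<mu>) a = r *\<^sub>R smc \<mu> a" for r \<mu>
    by (simp add: scaleR_conv_of_real smc_of_real flip: smc_smc)
  show "norm (smc \<mu> a) \<le> cmod \<mu> * norm a" for \<mu> by (simp add: norm_smc)
qed

lemma quasi_inverse_root_average:
  assumes Q: "\<And>\<mu>. cmod \<mu> \<le> 1 \<Longrightarrow> quasi_inverse (smc \<mu> a) (Q \<mu>)"
  shows "cmod \<mu> \<le> 1 \<Longrightarrow>
    quasi_inverse (smc (\<mu> ^ 2 ^ k) (iterated_square a k)) (root_average Q k \<mu>)"
proof (induction k arbitrary: \<mu>)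
  case (Suc k)
  define c where "c = smc (\<mu> ^ 2 ^ k) (iterated_square a k)"
  have "quasi_inverse c (root_average Q k \<mu>)"
    using Suc unfolding c_def by blast
  moreover have "quasi_inverse (- c) (root_average Q k (\<mu> * zeta k))"
    using Suc.IH[of "\<mu> * zeta k"] Suc.prems
    by (simp add: c_def norm_mult norm_zeta power_mult_distrib zeta_power smc_uminus_left)
  moreover have "c * c = smc (\<mu> ^ 2 ^ Suc k) (iterated_square a (Suc k))"
    by (simp add: c_def smc_mult_left smc_mult_right smc_smc power_mult power2_eq_square
        flip: power_add mult_2)
  ultimately show ?case
    using quasi_inverse_square(1) by fastforce
qed (simp add: Q)

lemma uniformly_continuous_quasi_inverse_on_disc:
  assumes qi: "\<And>\<mu>. cmod \<mu> \<le> 1 \<Longrightarrow> quasi_invertible (smc \<mu> a)" and "e > 0"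
  obtains Q \<delta> where "\<delta> > 0" "\<And>\<mu>. cmod \<mu> \<le> 1 \<Longrightarrow> quasi_inverse (smc \<mu> a) (Q \<mu>)"
    "\<And>\<mu> \<nu>. cmod \<mu> \<le> 1 \<Longrightarrow> cmod \<nu> \<le> 1 \<Longrightarrow> dist \<nu> \<mu> < \<delta> \<Longrightarrow> dist (Q \<nu>) (Q \<mu>) < e"
proof -
  define Q where "Q \<mu> = (SOME q. quasi_inverse (smc \<mu> a) q)" for \<mu>
  have Q: "quasi_inverse (smc \<mu> a) (Q \<mu>)" if "cmod \<mu> \<le> 1" for \<mu>
    using qi[OF that] unfolding Q_def quasi_invertible_def by (rule someI_ex)
  have "continuous_on (cball 0 1) Q"
    by (rule continuous_on_quasi_inverse[OF linear_continuous_on[OF bounded_linear_smc_left[of a]]])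
      (simp add: Q)
  then have "uniformly_continuous_on (cball 0 1) Q"
    by (rule compact_uniformly_continuous) simp
  then obtain \<delta> where "\<delta> > 0"
    and "\<forall>\<mu>\<in>cball 0 1. \<forall>\<nu>\<in>cball 0 1. dist \<nu> \<mu> < \<delta> \<longrightarrow> dist (Q \<nu>) (Q \<mu>) < e"
    using \<open>e > 0\<close> unfolding uniformly_continuous_on_def by blast
  then show ?thesis
    using that[of \<delta> Q] Q by simp
qed

lemma norm_iterated_square_le_one_if_root_close:
  assumes Q: "\<And>\<mu>. cmod \<mu> \<le> 1 \<Longrightarrow> quasi_inverse (smc \<mu> a) (Q \<mu>)"
    and \<delta>: "\<And>\<mu> \<nu>. cmod \<mu> \<le> 1 \<Longrightarrow> cmod \<nu> \<le> 1 \<Longrightarrow> dist \<nu> \<mu> < \<delta> \<Longrightarrow> dist (Q \<nu>) (Q \<mu>) < 1/2"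
    and k: "dist (zeta k) 1 < \<delta>"
  shows "norm (iterated_square a k) \<le> 1"
proof (rule ccontr)
  define s where "s = iterated_square a k"
  assume "\<not> norm (iterated_square a k) \<le> 1"
  then obtain r where r: "0 < r" "r \<le> 1" "r ^ 2 ^ k * norm s = 1"
    using ex_le_one_power_mult_eq_one[of "norm s" "2 ^ k"] by (auto simp: s_def)
  \<comment> \<open>c has norm 1, while c and -c have quasi-inverses at the nearby points r and r * zeta k\<close>
  define c where "c = smc (of_real r ^ 2 ^ k) s"
  have "norm c = 1"
    using r by (simp add: c_def norm_smc norm_power)
  moreover have "quasi_inverse c (root_average Q k (of_real r))"
    using quasi_inverse_root_average[OF Q, of "of_real r" k] r by (simp add: c_def s_def)
  moreover have "quasi_inverse (- c) (root_average Q k (of_real r * zeta k))"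
    using quasi_inverse_root_average[OF Q, of "of_real r * zeta k" k] r
    by (simp add: c_def s_def norm_mult norm_zeta power_mult_distrib zeta_power smc_uminus_left)
  moreover have "of_real r * zeta k - of_real r = of_real r * (zeta k - 1)"
    by (simp add: algebra_simps)
  then have "dist (of_real r * zeta k) (of_real r) = r * dist (zeta k) 1"
    using r by (simp add: dist_norm norm_mult)
  then have "dist (of_real r * zeta k) (of_real r) < \<delta>"
    using k r mult_left_le_one_le[of "dist (zeta k) 1" r] by simp
  then have "norm (root_average Q k (of_real r * zeta k) - root_average Q k (of_real r)) < 1/2"
    using root_average_modulus[OF \<delta>, where \<mu> = "of_real r" and \<nu> = "of_real r * zeta k"] r
    by (simp add: dist_norm norm_mult norm_zeta)
  ultimately show False
    using norm_diff_quasi_inverses_opposite[of c "root_average Q k (of_real r)"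
        "root_average Q k (of_real r * zeta k)"] by linarith
qed

lemma norm_iterated_square_le_one:
  assumes "\<And>\<mu>. cmod \<mu> \<le> 1 \<Longrightarrow> quasi_invertible (smc \<mu> a)"
  shows "\<exists>k. norm (iterated_square a k) \<le> 1"
proof -
  obtain Q \<delta> where "\<delta> > 0" "\<And>\<mu>. cmod \<mu> \<le> 1 \<Longrightarrow> quasi_inverse (smc \<mu> a) (Q \<mu>)"
    "\<And>\<mu> \<nu>. cmod \<mu> \<le> 1 \<Longrightarrow> cmod \<nu> \<le> 1 \<Longrightarrow> dist \<nu> \<mu> < \<delta> \<Longrightarrow> dist (Q \<nu>) (Q \<mu>) < 1/2"
    by (rule uniformly_continuous_quasi_inverse_on_disc[OF assms, of "1/2"]) auto
  moreover obtain k where "dist (zeta k) 1 < \<delta>"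
    using zeta_tendsto \<open>\<delta> > 0\<close> unfolding lim_sequentially by blast
  ultimately show ?thesis
    using norm_iterated_square_le_one_if_root_close by blast
qed

lemma not_quasi_invertible_eigenfunctional:
  assumes "\<not> quasi_invertible b"
  shows "\<exists>\<psi>. cbounded_linear_functional smc \<psi> \<and> \<psi> b \<noteq> 0 \<and> (\<forall>y. \<psi> (b * y) = \<psi> y)"
proof -
  define L where "L y = y - b * y" for y
  have "linear L"
    unfolding L_def linear_iff by (simp add: algebra_simps)
  then have "subspace (range L)"
    by (rule linear_subspace_image[OF _ subspace_UNIV])
  moreover have "smc c z \<in> range L" if "z \<in> range L" for c z
  proof -
    obtain y where "z = L y" using \<open>z \<in> range L\<close> by blast
    then have "smc c z = L (smc c y)" by (simp add: L_def smc_diff smc_mult_right)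
    then show ?thesis by simp
  qed
  moreover have "- b \<notin> closure (range L)"
  proof
    assume "- b \<in> closure (range L)"
    then obtain y where "dist (L y) (- b) < 1"
      unfolding closure_approachable by (auto dest: spec[of _ 1])
    then have "quasi_invertible (b + y - b * y)"
      by (intro quasi_invertible_if_norm_less_one) (simp add: L_def dist_norm algebra_simps)
    then show False
      using assms quasi_invertible_if_quasi_invertible_product by blast
  qed
  ultimately obtain \<psi> where \<psi>: "cbounded_linear_functional smc \<psi>" "\<forall>z\<in>range L. \<psi> z = 0"
    and "\<psi> (- b) \<noteq> 0"
    using separating_cbounded_linear_functional by blast
  then have "\<psi> b \<noteq> 0"
    using cbounded_linear_functional_diff[OF \<psi>(1), of 0 b]
      cbounded_linear_functional_diff[OF \<psi>(1), of 0 0] by simp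
  moreover have "\<psi> (b * y) = \<psi> y" for y
    using \<psi>(2) cbounded_linear_functional_diff[OF \<psi>(1), of y "b * y"] by (simp add: L_def)
  ultimately show ?thesis
    using \<psi>(1) by blast
qed

lemma not_weakly_hypercyclic_if_not_quasi_invertible:
  assumes "cmod \<mu> \<le> 1" "\<not> quasi_invertible (smc \<mu> a)"
  shows "\<not> weakly_hypercyclic smc ((*) a)"
proof -
  obtain \<psi> where \<psi>: "cbounded_linear_functional smc \<psi>" "\<psi> (smc \<mu> a) \<noteq> 0"
    and fixed: "\<And>y. \<psi> (smc \<mu> a * y) = \<psi> y"
    using not_quasi_invertible_eigenfunctional[OF assms(2)] by blast
  have smc_\<psi>: "\<psi> (smc \<mu> x) = \<mu> * \<psi> x" for x
    using cbounded_linear_functional_smc[OF \<psi>(1)] .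
  then have "\<mu> \<noteq> 0" "\<psi> a \<noteq> 0"
    using \<psi>(2) by auto
  moreover have "\<psi> (a * y) = inverse \<mu> * \<psi> y" for y
  proof -
    have "\<psi> y = \<mu> * \<psi> (a * y)"
      using fixed[of y] smc_\<psi>[of "a * y"] by (simp add: smc_mult_left)
    then show ?thesis using \<open>\<mu> \<noteq> 0\<close> by simp
  qed
  moreover have "1 \<le> cmod (inverse \<mu>)"
    using assms(1) \<open>\<mu> \<noteq> 0\<close> by (simp add: norm_inverse one_le_inverse_iff)
  ultimately show ?thesis
    using adjoint_eigenvector_not_weakly_hypercyclic[OF \<psi>(1)] by blast
qed

lemma not_weakly_hypercyclic_if_quasi_invertible_on_disc:
  assumes "(v::'a) \<noteq> 0" "\<And>\<mu>. cmod \<mu> \<le> 1 \<Longrightarrow> quasi_invertible (smc \<mu> a)"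
  shows "\<not> weakly_hypercyclic smc ((*) a)"
proof -
  obtain k where "norm (iterated_square a k) \<le> 1"
    using norm_iterated_square_le_one assms(2) by blast
  then show ?thesis
    unfolding weakly_hypercyclic_def
    using bounded_not_weakly_dense[OF assms(1) bounded_orbit_if_norm_iterated_square_le_one] by blast
qed

end

theorem proposition3p2:
  fixes smc :: "complex \<Rightarrow> 'a::{banach, real_normed_algebra, comm_ring} \<Rightarrow> 'a"
    and a :: 'a
  assumes "complex_algebra_scaling smc"
    and "\<exists>x::'a. x \<noteq> 0"
  shows "\<not> weakly_hypercyclic smc (\<lambda>b. a * b)"
proof -
  interpret comm_complex_banach_algebra smc
    by unfold_locales (rule assms(1))
  obtain v :: 'a where "v \<noteq> 0"
    using assms(2) by blast
  show ?thesis
  proof (cases "\<forall>\<mu>. cmod \<mu> \<le> 1 \<longrightarrow> quasi_invertible (smc \<mu> a)")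
    case True
    then show ?thesis
      using not_weakly_hypercyclic_if_quasi_invertible_on_disc[OF \<open>v \<noteq> 0\<close>] by blast
  next
    case False
    then show ?thesis
      using not_weakly_hypercyclic_if_not_quasi_invertible by blast
  qed
qed

end
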